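(* For every real number $k>0$ and all integers $0<m_1<m_2<\cdots<m_n$, the $n\times n$ matrix $M=\big((k+i)^{m_j}-(k+i-1)^{m_j}\big)_{i,j=1}^n$ has positive determinant. *)

theory Defs
  imports "Jordan_Normal_Form.Determinant"
begin

end

theory Submission
  imports Defs
begin

text \<open>A generalized Vandermonde matrix \<open>(x\<^sub>i ^ a\<^sub>j)\<close> with positive increasing nodes
\<open>x\<^sub>i\<close> and increasing exponents \<open>a\<^sub>j\<close> is nonsingular, because by Rolle's theorem a real
linear combination of \<open>n\<close> distinct monomials has at most \<open>n - 1\<close> positive zeros. Its
determinant is even positive, by induction on \<open>n\<close>: as a function of the last node it is a
combination of powers whose leading coefficient is the smaller determinant, so it is positive
for large arguments, and it cannot change sign as long as the nodes stay ordered.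
Subtracting consecutive rows of the generalized Vandermonde matrix with nodes
\<open>k, k + 1, \<dots>, k + n\<close> and exponents \<open>0, m\<^sub>1, \<dots>, m\<^sub>n\<close> turns its first column into a unit
vector, and the complementary minor is the matrix of the theorem.\<close>

lemma strict_mono_on_lessThanI:
  fixes f :: "nat \<Rightarrow> 'a::order"
  assumes "\<And>j. Suc j < n \<Longrightarrow> f j < f (Suc j)"
  shows "strict_mono_on {..<n} f"
proof (rule strict_mono_onI)
  fix i j assume "i \<in> {..<n}" "j \<in> {..<n}" "i < j"
  then show "f i < f j"
  proof (induction j)
    case (Suc j)
    then show ?case using assms[of j] by (cases "i = j") auto
  qed simp
qed

lemma zeros_of_derivative_interlace:
  fixes f f' :: "real \<Rightarrow> real" and x :: "nat \<Rightarrow> real"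
  assumes "strict_mono_on {..<Suc n} x"
    and "\<And>i. i < Suc n \<Longrightarrow> f (x i) = 0"
    and "\<And>t. (f has_real_derivative f' t) (at t)"
  obtains y where "strict_mono_on {..<n} y"
    and "\<And>i. i < n \<Longrightarrow> x i < y i \<and> y i < x (Suc i) \<and> f' (y i) = 0"
proof -
  have "\<exists>y. x i < y \<and> y < x (Suc i) \<and> f' y = 0" if "i < n" for i
  proof -
    have "x i < x (Suc i)" using strict_mono_onD[OF assms(1), of i "Suc i"] that by simp
    then obtain z where "x i < z" "z < x (Suc i)" "f (x (Suc i)) - f (x i) = (x (Suc i) - x i) * f' z"
      using MVT2[of "x i" "x (Suc i)" f f'] assms(3) by blast
    then show ?thesis using assms(2)[of i] assms(2)[of "Suc i"] that by auto
  qed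
  then obtain y where y: "\<And>i. i < n \<Longrightarrow> x i < y i \<and> y i < x (Suc i) \<and> f' (y i) = 0"
    by metis
  have "strict_mono_on {..<n} y"
  proof (rule strict_mono_onI)
    fix i j assume "i \<in> {..<n}" "j \<in> {..<n}" "i < j"
    then have "y i < x (Suc i)" "x (Suc i) \<le> x j" "x j < y j"
      using y[of i] y[of j] assms(1) by (auto simp: strict_mono_on_leD)
    then show "y i < y j" by linarith
  qed
  from this y show thesis by (rule that)
qed

lemma sum_powers_vanishing_imp_coeffs_zero:
  fixes x c :: "nat \<Rightarrow> real" and a :: "nat \<Rightarrow> nat"
  assumes "strict_mono_on {..<n} x" and "\<And>i. i < n \<Longrightarrow> 0 < x i"
    and "strict_mono_on {..<n} a"
    and "\<And>i. i < n \<Longrightarrow> (\<Sum>j<n. c j * x i ^ a j) = 0"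
  shows "j < n \<Longrightarrow> c j = 0"
  using assms
proof (induction n arbitrary: x a c j)
  case 0
  then show ?case by simp
next
  case (Suc n)
  note x_mono = Suc.prems(2) and x_pos = Suc.prems(3) and a_mono = Suc.prems(4)
  have a0_le: "a 0 \<le> a j" if "j < Suc n" for j
    using strict_mono_onD[OF a_mono, of 0 j] that by (cases j) auto
  define e where "e j = a j - a 0" for j
  \<comment> \<open>After dividing by \<open>t ^ a 0\<close>, Rolle's theorem passes the zeros to the derivative,
    which has one term fewer.\<close>
  define q where "q t = (\<Sum>j<Suc n. c j * t ^ e j)" for t :: real
  have q_zero: "q (x i) = 0" if "i < Suc n" for i
  proof -
    have "(\<Sum>j<Suc n. c j * x i ^ a j) = x i ^ a 0 * q (x i)"
      unfolding q_def sum_distrib_left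
      by (intro sum.cong) (auto simp: e_def power_add[symmetric] a0_le)
    then show ?thesis using Suc.prems(5)[OF that] x_pos[OF that] by simp
  qed
  define c' where "c' j = c (Suc j) * of_nat (e (Suc j))" for j
  define a' where "a' j = e (Suc j) - 1" for j
  have q_deriv: "(q has_real_derivative (\<Sum>j<n. c' j * t ^ a' j)) (at t)" for t
  proof -
    have "(q has_real_derivative (\<Sum>j<Suc n. c j * (of_nat (e j) * t ^ (e j - 1)))) (at t)"
      unfolding q_def by (auto intro!: derivative_eq_intros sum.cong simp: mult_ac)
    also have "(\<Sum>j<Suc n. c j * (of_nat (e j) * t ^ (e j - 1))) = (\<Sum>j<n. c' j * t ^ a' j)"
      unfolding sum.lessThan_Suc_shift by (auto simp: e_def c'_def a'_def intro!: sum.cong)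
    finally show ?thesis .
  qed
  obtain y where y_mono: "strict_mono_on {..<n} y"
    and y: "\<And>i. i < n \<Longrightarrow> x i < y i \<and> y i < x (Suc i) \<and> (\<Sum>j<n. c' j * y i ^ a' j) = 0"
    using zeros_of_derivative_interlace[OF x_mono q_zero q_deriv] by blast
  have a'_mono: "strict_mono_on {..<n} a'"
  proof (rule strict_mono_onI)
    fix i j assume "i \<in> {..<n}" "j \<in> {..<n}" "i < j"
    then have "a 0 < a (Suc i)" "a (Suc i) < a (Suc j)"
      using strict_mono_onD[OF a_mono] by simp_all
    then show "a' i < a' j" by (simp add: a'_def e_def)
  qed
  have c_Suc: "c (Suc j) = 0" if "j < n" for j
  proof -
    have "y i > 0" if "i < n" for i using y[OF that] x_pos[of i] that by simp
    then have "c' j = 0" using Suc.IH[OF _ y_mono _ a'_mono] y that by blast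
    moreover have "e (Suc j) \<noteq> 0" using strict_mono_onD[OF a_mono, of 0 "Suc j"] that by (simp add: e_def)
    ultimately show ?thesis by (simp add: c'_def)
  qed
  have "c 0 = q (x 0)" unfolding q_def sum.lessThan_Suc_shift using c_Suc by (simp add: e_def)
  then have "c 0 = 0" using q_zero[of 0] by simp
  then show ?case using c_Suc Suc.prems(1) by (cases j) auto
qed

definition gen_vandermonde :: "nat \<Rightarrow> (nat \<Rightarrow> 'a::comm_ring_1) \<Rightarrow> (nat \<Rightarrow> nat) \<Rightarrow> 'a mat" where
  "gen_vandermonde n x a = mat n n (\<lambda>(i, j). x i ^ a j)"

lemma gen_vandermonde_carrier [simp]: "gen_vandermonde n x a \<in> carrier_mat n n"
  by (simp add: gen_vandermonde_def)

lemma det_gen_vandermonde_nonzero: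
  fixes x :: "nat \<Rightarrow> real"
  assumes "strict_mono_on {..<n} x" and "\<And>i. i < n \<Longrightarrow> 0 < x i"
    and "strict_mono_on {..<n} a"
  shows "det (gen_vandermonde n x a) \<noteq> 0"
proof
  assume "det (gen_vandermonde n x a) = 0"
  then obtain v where v: "v \<in> carrier_vec n" "v \<noteq> 0\<^sub>v n" "gen_vandermonde n x a *\<^sub>v v = 0\<^sub>v n"
    using det_0_iff_vec_prod_zero[of "gen_vandermonde n x a" n] by auto
  have "(\<Sum>j<n. v $ j * x i ^ a j) = 0" if "i < n" for i
  proof -
    have "(gen_vandermonde n x a *\<^sub>v v) $ i = 0" using v(3) that by simp
    then show ?thesis using that v(1)
      by (simp add: gen_vandermonde_def scalar_prod_def lessThan_atLeast0 mult.commute)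
  qed
  then have "v = 0\<^sub>v n"
    using sum_powers_vanishing_imp_coeffs_zero[OF assms] v(1) by (intro eq_vecI) auto
  with v(2) show False by simp
qed

lemma sum_powers_eventually_pos:
  fixes C :: "nat \<Rightarrow> real"
  assumes "strict_mono_on {..n} a" and "C n > 0"
  shows "eventually (\<lambda>t. (\<Sum>j\<le>n. C j * t ^ a j) > 0) at_top"
proof -
  have "((\<lambda>t. (\<Sum>j\<le>n. C j * t ^ a j) / t ^ a n) \<longlongrightarrow> C n) at_top"
  proof -
    have lower: "((\<lambda>t. C j * t ^ a j / t ^ a n) \<longlongrightarrow> 0) at_top" if "j < n" for j
    proof -
      have "a j < a n" using strict_mono_onD[OF assms(1), of j n] that by simp
      have "eventually (\<lambda>t. C j * t ^ a j / t ^ a n = C j * inverse (t ^ (a n - a j))) at_top"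
        using eventually_gt_at_top[of "0::real"]
        by eventually_elim (use \<open>a j < a n\<close> in \<open>simp add: power_diff field_simps\<close>)
      moreover have "((\<lambda>t::real. C j * inverse (t ^ (a n - a j))) \<longlongrightarrow> C j * 0) at_top"
        using \<open>a j < a n\<close>
        by (intro tendsto_mult tendsto_const tendsto_inverse_0_at_top filterlim_pow_at_top filterlim_ident) simp
      ultimately show ?thesis by (simp add: tendsto_cong)
    qed
    have "((\<lambda>t. (\<Sum>j<n. C j * t ^ a j / t ^ a n) + C n * t ^ a n / t ^ a n) \<longlongrightarrow> 0 + C n) at_top"
    proof (intro tendsto_add)
      show "((\<lambda>t. \<Sum>j<n. C j * t ^ a j / t ^ a n) \<longlongrightarrow> 0) at_top"
        using lower by (intro tendsto_null_sum) simp
      have "eventually (\<lambda>t. C n * t ^ a n / t ^ a n = C n) at_top"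
        using eventually_gt_at_top[of "0::real"] by eventually_elim simp
      then show "((\<lambda>t. C n * t ^ a n / t ^ a n) \<longlongrightarrow> C n) at_top"
        by (simp add: tendsto_cong)
    qed
    then show ?thesis
      by (simp only: lessThan_Suc_atMost[symmetric] sum.lessThan_Suc add_divide_distrib
          sum_divide_distrib add_0_left)
  qed
  then have "eventually (\<lambda>t. (\<Sum>j\<le>n. C j * t ^ a j) / t ^ a n > 0) at_top"
    using assms(2) by (rule order_tendstoD)
  then show ?thesis using eventually_gt_at_top[of 0]
    by eventually_elim (simp add: zero_less_divide_iff)
qed

lemma det_gen_vandermonde_last_row:
  "det (gen_vandermonde (Suc n) (x(n := t)) a)
     = (\<Sum>j\<le>n. cofactor (gen_vandermonde (Suc n) x a) n j * t ^ a j)"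
proof -
  have minor: "mat_delete (gen_vandermonde (Suc n) (x(n := t)) a) n j
      = mat_delete (gen_vandermonde (Suc n) x a) n j" for j
    unfolding mat_delete_def gen_vandermonde_def by (intro eq_matI) auto
  have "det (gen_vandermonde (Suc n) (x(n := t)) a)
      = (\<Sum>j<Suc n. gen_vandermonde (Suc n) (x(n := t)) a $$ (n, j)
                     * cofactor (gen_vandermonde (Suc n) (x(n := t)) a) n j)"
    by (rule laplace_expansion_row) auto
  also have "\<dots> = (\<Sum>j\<le>n. cofactor (gen_vandermonde (Suc n) x a) n j * t ^ a j)"
    unfolding cofactor_def minor lessThan_Suc_atMost
    by (intro sum.cong) (auto simp: gen_vandermonde_def mult.commute)
  finally show ?thesis .
qed

lemma cofactor_gen_vandermonde_last:
  "cofactor (gen_vandermonde (Suc n) x a) n n = det (gen_vandermonde n x a)"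
proof -
  have "mat_delete (gen_vandermonde (Suc n) x a) n n = gen_vandermonde n x a"
    unfolding mat_delete_def gen_vandermonde_def by (intro eq_matI) auto
  then show ?thesis by (simp add: cofactor_def)
qed

lemma det_gen_vandermonde_pos:
  fixes x :: "nat \<Rightarrow> real"
  assumes "strict_mono_on {..<n} x" and "\<And>i. i < n \<Longrightarrow> 0 < x i"
    and "strict_mono_on {..<n} a"
  shows "det (gen_vandermonde n x a) > 0"
  using assms
proof (induction n arbitrary: x)
  case 0
  then show ?case by (simp add: gen_vandermonde_def)
next
  case (Suc n)
  note x_mono = Suc.prems(1) and x_pos = Suc.prems(2) and a_mono = Suc.prems(3)
  define C where "C j = cofactor (gen_vandermonde (Suc n) x a) n j" for j
  define f where "f t = (\<Sum>j\<le>n. C j * t ^ a j)" for t :: real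
  have det_f: "det (gen_vandermonde (Suc n) (x(n := t)) a) = f t" for t
    unfolding f_def C_def by (rule det_gen_vandermonde_last_row)
  have "{..<n} \<subseteq> {..<Suc n}" by auto
  then have "C n > 0"
    unfolding C_def cofactor_gen_vandermonde_last
    using Suc.IH[OF monotone_on_subset[OF x_mono] _ monotone_on_subset[OF a_mono]] x_pos by simp
  have f_nonzero: "f t \<noteq> 0" if "x n \<le> t" for t
  proof -
    have "strict_mono_on {..<Suc n} (x(n := t))"
    proof (rule strict_mono_onI)
      fix i j assume "i \<in> {..<Suc n}" "j \<in> {..<Suc n}" "i < j"
      then show "(x(n := t)) i < (x(n := t)) j"
        using strict_mono_onD[OF x_mono, of i j] strict_mono_onD[OF x_mono, of i n] that
        by (cases "j = n") auto
    qed
    moreover have "0 < (x(n := t)) i" if "i < Suc n" for i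
      using x_pos[OF that] x_pos[of n] \<open>x n \<le> t\<close> by auto
    ultimately show ?thesis
      using det_gen_vandermonde_nonzero[OF _ _ a_mono] det_f by metis
  qed
  have "eventually (\<lambda>t. f t > 0 \<and> t \<ge> x n) at_top"
    using sum_powers_eventually_pos[of n a C] a_mono \<open>C n > 0\<close> eventually_ge_at_top[of "x n"]
    by (auto simp: f_def lessThan_Suc_atMost intro: eventually_conj)
  then obtain T where "f T > 0" "x n \<le> T"
    by (auto dest: eventually_happens)
  have "f (x n) > 0"
  proof (rule ccontr)
    assume "\<not> f (x n) > 0"
    moreover have "continuous_on {x n..T} f" unfolding f_def by (intro continuous_intros)
    ultimately obtain z where "x n \<le> z" "z \<le> T" "f z = 0"
      using IVT'[of f "x n" 0 T] \<open>f T > 0\<close> \<open>x n \<le> T\<close> by force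
    then show False using f_nonzero by blast
  qed
  then show ?case using det_f[of "x n"] by simp
qed

lemma det_consecutive_row_differences:
  fixes g :: "nat \<Rightarrow> nat \<Rightarrow> 'a::comm_ring_1"
  shows "det (mat n n (\<lambda>(i, j). if i = 0 then g i j else g i j - g (i - 1) j))
       = det (mat n n (\<lambda>(i, j). g i j))"
proof -
  define D where "D s = mat n n (\<lambda>(i, j). if s < i then g i j - g (i - 1) j else g i j)" for s
  have "det (D s) = det (D n)" if "s \<le> n" for s
    using that
  proof (induction s rule: inc_induct)
    case (step s)
    have "D s = addrow (-1) (Suc s) s (D (Suc s))"
      unfolding D_def mat_addrow_def by (intro eq_matI) auto
    then have "det (D s) = det (D (Suc s))"
      using det_addrow[of s n "Suc s" "D (Suc s)" "-1"] step.hyps by (simp add: D_def)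
    then show ?case using step.IH by simp
  qed simp
  moreover have "D 0 = mat n n (\<lambda>(i, j). if i = 0 then g i j else g i j - g (i - 1) j)"
    unfolding D_def by (intro eq_matI) auto
  moreover have "D n = mat n n (\<lambda>(i, j). g i j)"
    unfolding D_def by (intro eq_matI) auto
  ultimately show ?thesis by (metis le0)
qed

lemma det_gen_vandermonde_consecutive_differences:
  fixes x :: "nat \<Rightarrow> 'a::comm_ring_1" and a :: "nat \<Rightarrow> nat"
  shows "det (mat n n (\<lambda>(i, j). x (i + 1) ^ a j - x i ^ a j))
       = det (gen_vandermonde (Suc n) x (case_nat 0 a))"
proof -
  define D where "D = mat (Suc n) (Suc n) (\<lambda>(i, j).
    if i = 0 then x i ^ case_nat 0 a j else x i ^ case_nat 0 a j - x (i - 1) ^ case_nat 0 a j)"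
  have "det (gen_vandermonde (Suc n) x (case_nat 0 a)) = det D"
    unfolding gen_vandermonde_def D_def by (rule det_consecutive_row_differences[symmetric])
  \<comment> \<open>The exponent \<open>0\<close> makes the first column of \<open>D\<close> the first unit vector.\<close>
  also have "\<dots> = (\<Sum>i<Suc n. D $$ (i, 0) * cofactor D i 0)"
    by (rule laplace_expansion_column) (auto simp: D_def)
  also have "\<dots> = det (mat_delete D 0 0)"
    unfolding sum.lessThan_Suc_shift by (simp add: D_def cofactor_def)
  also have "mat_delete D 0 0 = mat n n (\<lambda>(i, j). x (i + 1) ^ a j - x i ^ a j)"
    unfolding mat_delete_def D_def by (intro eq_matI) auto
  finally show ?thesis ..
qed

theorem claim4:
  fixes k :: real and n :: nat and m :: "nat \<Rightarrow> nat"
  assumes "k > 0"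
    and "0 < m 0"
    and "\<And>j. Suc j < n \<Longrightarrow> m j < m (Suc j)"
  shows "det (mat n n (\<lambda>(i, j). (k + real (i + 1)) ^ m j - (k + real (i + 1) - 1) ^ m j)) > 0"
proof -
  define x where "x i = k + real i" for i
  have "mat n n (\<lambda>(i, j). (k + real (i + 1)) ^ m j - (k + real (i + 1) - 1) ^ m j)
      = mat n n (\<lambda>(i, j). x (i + 1) ^ m j - x i ^ m j)"
    by (simp add: x_def)
  also have "det \<dots> = det (gen_vandermonde (Suc n) x (case_nat 0 m))"
    by (rule det_gen_vandermonde_consecutive_differences)
  also have "\<dots> > 0"
  proof (rule det_gen_vandermonde_pos)
    show "strict_mono_on {..<Suc n} x" by (rule strict_mono_onI) (simp add: x_def)
    show "0 < x i" for i using assms(1) by (simp add: x_def)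
    show "strict_mono_on {..<Suc n} (case_nat 0 m)"
      by (rule strict_mono_on_lessThanI) (use assms(2,3) in \<open>auto split: nat.split\<close>)
  qed
  finally show ?thesis .
qed

end
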